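(* Let $m\in\mathbb{N}$, let $f_1,\dots,f_m\in C[0,1]$, and let $\mathcal{R}'$ be the ring of functions $x\mapsto p(f_1(x),\dots,f_m(x))$ where $p$ ranges over polynomials in $m$ variables with real coefficients. Then for every $r'\in\mathcal{R}'$, $$\overline{\dim}_B G(r')\le \max\{\overline{\dim}_B G(f_1),\dots,\overline{\dim}_B G(f_m)\}.$$
   Context: $C[0,1]$ is the space of real-valued continuous functions on $[0,1]$; $G(h)=\{(x,h(x)):x\in[0,1]\}\subset\mathbb{R}^2$ is the graph of $h$. For a nonempty bounded set $F$, $N_\delta(F)$ is the smallest number of sets of diameter at most $\delta$ covering $F$, and $\overline{\dim}_B F=\limsup_{\delta\to0}\frac{\log N_\delta(F)}{-\log\delta}$. *)

theory Defs
  imports "HOL-Analysis.Analysis" "HOL-Library.Liminf_Limsup"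
begin

definition graph01 :: "(real \<Rightarrow> real) \<Rightarrow> (real \<times> real) set" where
  "graph01 h = {(x, h x) | x. x \<in> {0..1}}"

definition covering_number :: "real \<Rightarrow> 'a::metric_space set \<Rightarrow> nat" where
  "covering_number \<delta> F = (LEAST n. \<exists>C. finite C \<and> card C = n \<and>
      (\<forall>S\<in>C. bounded S \<and> diameter S \<le> \<delta>) \<and> F \<subseteq> \<Union>C)"

definition upper_box_dim :: "'a::metric_space set \<Rightarrow> ereal" where
  "upper_box_dim F = Limsup (at_right 0)
      (\<lambda>\<delta>. ereal (ln (real (covering_number \<delta> F)) / - ln \<delta>))"

text \<open>The ring R' generated by f_0..f_{m-1}: functions x \<mapsto> p(f_0 x, ..., f_{m-1} x),
  p a real polynomial in m variables, written as a finite sum of monomials with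
  exponent vectors \<alpha> (only \<alpha> i for i < m matter).\<close>
definition poly_ring_of :: "nat \<Rightarrow> (nat \<Rightarrow> real \<Rightarrow> real) \<Rightarrow> (real \<Rightarrow> real) set" where
  "poly_ring_of m f = {r. \<exists>A c. finite A \<and>
      r = (\<lambda>x. \<Sum>\<alpha>\<in>A. c \<alpha> * (\<Prod>i<m. f i x ^ \<alpha> i))}"

end

theory Submission
  imports Defs
begin

text \<open>A polynomial r in f_1, ..., f_m is Lipschitz for the pseudometric
  \<Sum>i. |f_i x - f_i y| on [0,1]. Cut [0,1] into columns of width \<delta>. By the intermediate value
  theorem the oscillation of f_i over a column is at most 2\<delta> times the number of sets of an
  optimal \<delta>-cover of the graph of f_i that meet the graph above that column, and each such set
  meets at most three columns. Hence the oscillations of r over all columns add up to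
  O(\<delta> \<Sum>i. N_\<delta>(G f_i)), and counting the cells of a grid of mesh \<delta>/2 met by G r gives
  N_\<delta>(G r) \<le> K \<Sum>i. N_\<delta>(G f_i) for a constant K. The constant disappears in the limit of
  ln N_\<delta> / -ln \<delta>.\<close>

definition delta_cover :: "real \<Rightarrow> 'a::metric_space set set \<Rightarrow> 'a set \<Rightarrow> bool" where
  "delta_cover \<delta> C F \<longleftrightarrow> finite C \<and> (\<forall>S\<in>C. bounded S \<and> diameter S \<le> \<delta>) \<and> F \<subseteq> \<Union>C"

lemma covering_number_le_card:
  assumes "delta_cover \<delta> C F"
  shows "covering_number \<delta> F \<le> card C"
  using assms unfolding covering_number_def delta_cover_def by (intro Least_le) blast

lemma covering_number_attained:
  assumes "delta_cover \<delta> C F"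
  obtains C' where "delta_cover \<delta> C' F" "card C' = covering_number \<delta> F"
proof -
  have "\<exists>n C. finite C \<and> card C = n \<and> (\<forall>S\<in>C. bounded S \<and> diameter S \<le> \<delta>) \<and> F \<subseteq> \<Union>C"
    using assms unfolding delta_cover_def by blast
  from LeastI_ex[OF this] show ?thesis
    using that unfolding covering_number_def delta_cover_def by blast
qed

lemma compact_imp_delta_cover:
  fixes F :: "'a::euclidean_space set"
  assumes "compact F" "\<delta> > 0"
  obtains C where "delta_cover \<delta> C F"
proof -
  obtain k where "finite k" "F \<subseteq> (\<Union>x\<in>k. ball x (\<delta>/2))"
    using assms unfolding compact_eq_totally_bounded by (meson half_gt_zero)
  then have "delta_cover \<delta> ((\<lambda>x. ball x (\<delta>/2)) ` k) F"
    using assms(2) unfolding delta_cover_def by auto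
  then show ?thesis by (rule that)
qed

lemma compact_graph01:
  assumes "continuous_on {0..1} h"
  shows "compact (graph01 h)"
proof -
  have "graph01 h = (\<lambda>x. (x, h x)) ` {0..1}" unfolding graph01_def by auto
  moreover have "continuous_on {0..1} (\<lambda>x. (x, h x))"
    by (intro continuous_on_Pair continuous_on_id assms)
  ultimately show ?thesis by (metis compact_Icc compact_continuous_image)
qed

lemma covering_number_graph01_attained:
  assumes "continuous_on {0..1} h" "\<delta> > 0"
  obtains C where "delta_cover \<delta> C (graph01 h)" "card C = covering_number \<delta> (graph01 h)"
proof -
  obtain C0 where "delta_cover \<delta> C0 (graph01 h)"
    using compact_imp_delta_cover[OF compact_graph01[OF assms(1)] assms(2)] .
  then show ?thesis using that by (rule covering_number_attained)
qed

lemma components_le_diameter: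
  fixes p q :: "real \<times> real"
  assumes "bounded S" "diameter S \<le> \<delta>" "p \<in> S" "q \<in> S"
  shows "\<bar>fst p - fst q\<bar> \<le> \<delta>" "\<bar>snd p - snd q\<bar> \<le> \<delta>"
proof -
  have "dist p q \<le> \<delta>" using assms diameter_bounded_bound by fastforce
  then show "\<bar>fst p - fst q\<bar> \<le> \<delta>" "\<bar>snd p - snd q\<bar> \<le> \<delta>"
    using dist_fst_le[of p q] dist_snd_le[of p q] by (simp_all add: dist_real_def)
qed

lemma interval_length_le_card_cover:
  fixes T :: "real set set"
  assumes fin: "finite T" and sub: "{a..b} \<subseteq> \<Union>T" and ab: "a \<le> b" and d: "\<delta> \<ge> 0"
    and diam: "\<forall>S\<in>T. \<forall>s\<in>S. \<forall>t\<in>S. \<bar>s - t\<bar> \<le> \<delta>"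
  shows "b - a \<le> 2 * \<delta> * card T"
proof -
  define I where "I S = (if S = {} then {} else {(SOME s. s \<in> S) - \<delta> .. (SOME s. s \<in> S) + \<delta>})"
    for S :: "real set"
  have SI: "S \<subseteq> I S" if "S \<in> T" for S
  proof (cases "S = {}")
    case False
    then have "(SOME s. s \<in> S) \<in> S" by (simp add: some_in_eq)
    then show ?thesis using False diam that unfolding I_def by (force simp: abs_le_iff)
  qed (simp add: I_def)
  have "ennreal (b - a) = emeasure lborel {a..b}" using ab by simp
  also have "\<dots> \<le> emeasure lborel (\<Union>S\<in>T. I S)"
  proof (rule emeasure_mono)
    show "{a..b} \<subseteq> (\<Union>S\<in>T. I S)" using sub SI by blast
    show "(\<Union>S\<in>T. I S) \<in> sets lborel" using fin by (intro sets.finite_UN) (auto simp: I_def)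
  qed
  also have "\<dots> \<le> (\<Sum>S\<in>T. emeasure lborel (I S))"
    using fin by (intro emeasure_subadditive_finite) (auto simp: I_def)
  also have "\<dots> \<le> (\<Sum>S\<in>T. ennreal (2 * \<delta>))"
    using d by (intro sum_mono) (auto simp: I_def)
  also have "\<dots> = ennreal (2 * \<delta> * card T)" using d
    by (simp add: ennreal_mult' ennreal_of_nat_eq_real_of_nat mult.commute)
  finally show ?thesis using d by simp
qed

lemma delta_cover_graph01_card_ge:
  assumes "\<delta> > 0" "delta_cover \<delta> C (graph01 g)"
  shows "1 \<le> 2 * \<delta> * card C"
proof -
  define T where "T = (\<lambda>S. fst ` S) ` C"
  have "{0..1} \<subseteq> \<Union>T"
  proof
    fix x :: real assume "x \<in> {0..1}"
    then have "(x, g x) \<in> \<Union>C" using assms(2) unfolding graph01_def delta_cover_def by blast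
    then show "x \<in> \<Union>T" unfolding T_def by (force intro: image_eqI[of _ fst "(x, g x)"])
  qed
  moreover have "\<forall>S\<in>T. \<forall>s\<in>S. \<forall>t\<in>S. \<bar>s - t\<bar> \<le> \<delta>"
    using assms(2) components_le_diameter(1) unfolding T_def delta_cover_def by fastforce
  moreover have "finite T" using assms(2) unfolding T_def delta_cover_def by simp
  ultimately have "1 - 0 \<le> 2 * \<delta> * card T"
    using assms(1) by (intro interval_length_le_card_cover) auto
  also have "\<dots> \<le> 2 * \<delta> * card C"
    using assms unfolding T_def delta_cover_def by (auto intro: card_image_le)
  finally show ?thesis by simp
qed

section \<open>Columns\<close>

lemma card_columns_le_card_delta_cover:
  assumes "0 < \<delta>" "\<delta> \<le> 1" "delta_cover \<delta> C (graph01 g)"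
  shows "real (card {0..\<lfloor>1/\<delta>\<rfloor>}) \<le> 4 * card C"
proof -
  have "1/\<delta> \<le> 2 * card C"
    using delta_cover_graph01_card_ge[OF assms(1,3)] assms(1) by (simp add: divide_le_eq mult_ac)
  moreover have "real (card {0..\<lfloor>1/\<delta>\<rfloor>}) = of_int \<lfloor>1/\<delta>\<rfloor> + 1" using assms(1) by simp
  moreover have "of_int \<lfloor>1/\<delta>\<rfloor> \<le> 1/\<delta>" "1 \<le> 1/\<delta>" using assms(1,2) by simp_all
  ultimately show ?thesis by linarith
qed

definition column_sets ::
  "real \<Rightarrow> (real \<times> real) set set \<Rightarrow> (real \<Rightarrow> real) \<Rightarrow> int \<Rightarrow> (real \<times> real) set set" where
  "column_sets \<delta> C g j = {S\<in>C. \<exists>t\<in>{0..1}. \<lfloor>t/\<delta>\<rfloor> = j \<and> (t, g t) \<in> S}"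

lemma oscillation_le_card_column_sets:
  fixes g :: "real \<Rightarrow> real"
  assumes cont: "continuous_on {0..1} g" and d: "\<delta> > 0" and C: "delta_cover \<delta> C (graph01 g)"
    and x: "x \<in> {0..1}" "\<lfloor>x/\<delta>\<rfloor> = j" and y: "y \<in> {0..1}" "\<lfloor>y/\<delta>\<rfloor> = j"
  shows "\<bar>g x - g y\<bar> \<le> 2 * \<delta> * card (column_sets \<delta> C g j)"
proof -
  define B where "B = column_sets \<delta> C g j"
  have finB: "finite B" using C unfolding B_def column_sets_def delta_cover_def by simp
  have "\<bar>g a - g b\<bar> \<le> 2 * \<delta> * card B"
    if ab: "a \<le> b" "a \<in> {0..1}" "b \<in> {0..1}" "\<lfloor>a/\<delta>\<rfloor> = j" "\<lfloor>b/\<delta>\<rfloor> = j" for a b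
  proof -
    define T where "T = (\<lambda>S. snd ` S) ` B"
    have in_T: "g t \<in> \<Union>T" if "t \<in> {a..b}" for t
    proof -
      have "a/\<delta> \<le> t/\<delta>" "t/\<delta> \<le> b/\<delta>" using that d by (auto simp: divide_right_mono)
      then have "\<lfloor>t/\<delta>\<rfloor> = j" using ab by (metis floor_mono order_antisym)
      moreover have t01: "t \<in> {0..1}" using that ab by auto
      moreover from t01 obtain S where "S \<in> C" "(t, g t) \<in> S"
        using C unfolding delta_cover_def graph01_def by blast
      ultimately show ?thesis unfolding T_def B_def column_sets_def
        by (force intro: image_eqI[of _ snd "(t, g t)"])
    qed
    have "{min (g a) (g b)..max (g a) (g b)} \<subseteq> \<Union>T"
    proof
      fix v assume v: "v \<in> {min (g a) (g b)..max (g a) (g b)}"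
      have "continuous_on {a..b} g" using cont ab by (auto intro: continuous_on_subset)
      then have "\<exists>t\<in>{a..b}. g t = v"
        using IVT'[of g a v b] IVT2'[of g b v a] v ab by (cases "g a \<le> g b") auto
      then show "v \<in> \<Union>T" using in_T by auto
    qed
    moreover have "\<forall>S\<in>T. \<forall>s\<in>S. \<forall>t\<in>S. \<bar>s - t\<bar> \<le> \<delta>"
      using C components_le_diameter(2)
      unfolding T_def B_def column_sets_def delta_cover_def by fastforce
    ultimately have "max (g a) (g b) - min (g a) (g b) \<le> 2 * \<delta> * card T"
      using finB d unfolding T_def by (intro interval_length_le_card_cover) auto
    also have "\<dots> \<le> 2 * \<delta> * card B" unfolding T_def using d finB by (auto intro: card_image_le)
    finally show ?thesis by linarith
  qed
  from this[of x y] this[of y x] show ?thesis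
    using x y unfolding B_def by (cases "x \<le> y") (auto simp: abs_minus_commute)
qed

text \<open>A set of diameter at most \<delta> meets at most three consecutive columns.\<close>
lemma sum_card_column_sets_le:
  assumes d: "\<delta> > 0" and C: "delta_cover \<delta> C (graph01 g)" and J: "finite J"
  shows "(\<Sum>j\<in>J. card (column_sets \<delta> C g j)) \<le> 3 * card C"
proof -
  define P where "P S j \<longleftrightarrow> (\<exists>t\<in>{0..1::real}. \<lfloor>t/\<delta>\<rfloor> = j \<and> (t, g t) \<in> S)" for S j
  have finC: "finite C" using C unfolding delta_cover_def by simp
  have columns: "card {j\<in>J. P S j} \<le> 3" if "S \<in> C" for S
  proof (cases "\<exists>j. P S j")
    case True
    then obtain j0 u where u: "(u, g u) \<in> S" "\<lfloor>u/\<delta>\<rfloor> = j0" unfolding P_def by blast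
    have "{j\<in>J. P S j} \<subseteq> {j0-1..j0+1}"
    proof
      fix j assume "j \<in> {j\<in>J. P S j}"
      then obtain t where t: "(t, g t) \<in> S" "\<lfloor>t/\<delta>\<rfloor> = j" unfolding P_def by blast
      have "\<bar>t - u\<bar> \<le> \<delta>"
        using components_le_diameter(1)[OF _ _ t(1) u(1)] C that unfolding delta_cover_def by simp
      then have "\<bar>t/\<delta> - u/\<delta>\<bar> \<le> 1" using d
        by (simp add: diff_divide_distrib[symmetric] divide_le_eq_1)
      then have "\<bar>\<lfloor>t/\<delta>\<rfloor> - \<lfloor>u/\<delta>\<rfloor>\<bar> \<le> 1"
        by (smt (verit, best) floor_less_iff le_floor_iff of_int_1 of_int_diff of_int_floor_le floor_correct)
      then show "j \<in> {j0-1..j0+1}" using t u by auto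
    qed
    then have "card {j\<in>J. P S j} \<le> card {j0-1..j0+1}" by (intro card_mono) auto
    then show ?thesis by simp
  qed simp
  have "(\<Sum>j\<in>J. card (column_sets \<delta> C g j)) = (\<Sum>j\<in>J. \<Sum>S\<in>C. if P S j then 1 else 0)"
    using finC unfolding column_sets_def P_def by (simp add: sum.If_cases Collect_conj_eq Int_commute)
  also have "\<dots> = (\<Sum>S\<in>C. card {j\<in>J. P S j})"
    using J by (subst sum.swap) (simp add: sum.If_cases Collect_conj_eq Int_commute)
  also have "\<dots> \<le> (\<Sum>S\<in>C. 3)" by (rule sum_mono) (rule columns)
  finally show ?thesis by simp
qed

section \<open>Counting grid cells\<close>

definition grid_index :: "real \<Rightarrow> real \<times> real \<Rightarrow> int \<times> int" where
  "grid_index \<delta> p = (round (2 * fst p / \<delta>), round (2 * snd p / \<delta>))"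

definition grid_point :: "real \<Rightarrow> int \<times> int \<Rightarrow> real \<times> real" where
  "grid_point \<delta> k = (\<delta>/2 * of_int (fst k), \<delta>/2 * of_int (snd k))"

lemma dist_round_half_grid:
  fixes x \<delta> :: real
  assumes "\<delta> > 0"
  shows "\<bar>x - \<delta>/2 * of_int (round (2 * x / \<delta>))\<bar> \<le> \<delta>/4"
proof -
  have "x - \<delta>/2 * of_int (round (2 * x / \<delta>)) = \<delta>/2 * (2 * x / \<delta> - of_int (round (2 * x / \<delta>)))"
    using assms by (simp add: field_simps)
  then have "\<bar>x - \<delta>/2 * of_int (round (2 * x / \<delta>))\<bar> = \<bar>\<delta>/2\<bar> * \<bar>2 * x / \<delta> - of_int (round (2 * x / \<delta>))\<bar>"
    by (simp only: abs_mult)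
  also have "\<dots> \<le> \<delta>/2 * (1/2)"
    using assms of_int_round_abs_le[of "2 * x / \<delta>"] by (intro mult_mono) (auto simp: abs_minus_commute)
  finally show ?thesis by simp
qed

lemma dist_grid_point_grid_index:
  assumes "\<delta> > 0"
  shows "dist p (grid_point \<delta> (grid_index \<delta> p)) \<le> \<delta>/2"
proof -
  obtain x y where p: "p = (x, y)" by fastforce
  define u where "u = x - \<delta>/2 * of_int (round (2 * x / \<delta>))"
  define v where "v = y - \<delta>/2 * of_int (round (2 * y / \<delta>))"
  have "u\<^sup>2 \<le> (\<delta>/4)\<^sup>2" "v\<^sup>2 \<le> (\<delta>/4)\<^sup>2"
    using dist_round_half_grid[OF assms, of x] dist_round_half_grid[OF assms, of y]
    unfolding u_def v_def by (metis power2_abs power_mono abs_ge_zero)+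
  moreover have "(\<delta>/2)\<^sup>2 = 4 * (\<delta>/4)\<^sup>2" by (simp add: power2_eq_square)
  ultimately have "sqrt (u\<^sup>2 + v\<^sup>2) \<le> sqrt ((\<delta>/2)\<^sup>2)"
    using zero_le_power2[of "\<delta>/4"] by (intro real_sqrt_le_mono) linarith
  then show ?thesis
    using assms unfolding p grid_index_def grid_point_def dist_Pair_Pair dist_real_def u_def v_def
    by simp
qed

lemma covering_number_le_card_grid:
  assumes "\<delta> > 0" "finite Q" "grid_index \<delta> ` F \<subseteq> Q"
  shows "covering_number \<delta> F \<le> card Q"
proof -
  define C where "C = (\<lambda>k. cball (grid_point \<delta> k) (\<delta>/2)) ` Q"
  have "delta_cover \<delta> C F"
    unfolding delta_cover_def C_def
    using assms dist_grid_point_grid_index[OF assms(1)] by (fastforce simp: dist_commute)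
  then have "covering_number \<delta> F \<le> card C" by (rule covering_number_le_card)
  also have "\<dots> \<le> card Q" unfolding C_def using assms(2) by (rule card_image_le)
  finally show ?thesis .
qed

lemma round_double_diff_le:
  fixes u v \<delta> h :: real
  assumes "\<delta> > 0" "\<bar>u - v\<bar> \<le> \<delta> * h"
  shows "\<bar>round (2 * u / \<delta>) - round (2 * v / \<delta>)\<bar> \<le> \<lceil>2 * h\<rceil> + 1"
proof -
  have "\<bar>2 * u / \<delta> - 2 * v / \<delta>\<bar> \<le> 2 * h"
    using assms by (simp add: diff_divide_distrib[symmetric] divide_le_eq mult.commute
        flip: right_diff_distrib)
  moreover have "2 * h \<le> of_int \<lceil>2 * h\<rceil>" by simp
  moreover have "\<bar>of_int (round (2 * u / \<delta>)) - 2 * u / \<delta>\<bar> \<le> 1/2"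
    "\<bar>of_int (round (2 * v / \<delta>)) - 2 * v / \<delta>\<bar> \<le> 1/2"
    by (rule of_int_round_abs_le)+
  ultimately have "of_int \<bar>round (2 * u / \<delta>) - round (2 * v / \<delta>)\<bar> \<le> (of_int (\<lceil>2 * h\<rceil> + 1) :: real)"
    by (simp only: abs_le_iff of_int_add of_int_1 of_int_abs of_int_diff) linarith
  then show ?thesis by (simp only: of_int_le_iff)
qed

lemma round_double_in_column:
  fixes x \<delta> :: real
  assumes "\<lfloor>x/\<delta>\<rfloor> = j"
  shows "round (2 * x / \<delta>) \<in> {2*j..2*j+2}"
proof -
  have "of_int j \<le> x/\<delta>" "x/\<delta> \<le> of_int j + 1" using assms by linarith+
  then have "round (of_int (2*j) :: real) \<le> round (2 * x / \<delta>)"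
    "round (2 * x / \<delta>) \<le> round (of_int (2*j+2) :: real)"
    by (intro round_mono; simp)+
  then show ?thesis by (simp only: round_of_int atLeastAtMost_iff)
qed

text \<open>Above the j-th column the graph lies in a strip of height \<delta> h j, which meets
  O(h j + 1) cells of the grid of mesh \<delta>/2; there are about 1/\<delta> columns.\<close>
lemma covering_number_graph01_le_column_oscillation:
  fixes g h :: "_ \<Rightarrow> real"
  assumes d: "\<delta> > 0" and h: "\<And>j. h j \<ge> 0"
    and osc: "\<And>x y. x \<in> {0..1} \<Longrightarrow> y \<in> {0..1} \<Longrightarrow> \<lfloor>x/\<delta>\<rfloor> = \<lfloor>y/\<delta>\<rfloor> \<Longrightarrow>
      \<bar>g x - g y\<bar> \<le> \<delta> * h \<lfloor>x/\<delta>\<rfloor>"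
  shows "real (covering_number \<delta> (graph01 g)) \<le> (\<Sum>j\<in>{0..\<lfloor>1/\<delta>\<rfloor>}. 12 * h j + 15)"
proof -
  define J where "J = \<lfloor>1/\<delta>\<rfloor>"
  define c where "c j = round (2 * g (of_int j * \<delta>) / \<delta>)" for j
  define H where "H j = \<lceil>2 * h j\<rceil> + 1" for j
  define Q where "Q = (\<Union>j\<in>{0..J}. {2*j..2*j+2} \<times> {c j - H j .. c j + H j})"
  have "grid_index \<delta> ` graph01 g \<subseteq> Q"
  proof
    fix p assume "p \<in> grid_index \<delta> ` graph01 g"
    then obtain x where x: "x \<in> {0..1}" "p = grid_index \<delta> (x, g x)"
      unfolding graph01_def by auto
    define j where "j = \<lfloor>x/\<delta>\<rfloor>"
    have "x/\<delta> \<le> 1/\<delta>" using x d by (simp add: divide_right_mono)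
    then have jJ: "j \<in> {0..J}" using x d unfolding j_def J_def by (auto intro: floor_mono)
    have "of_int j \<le> x/\<delta>" unfolding j_def by simp
    then have "of_int j * \<delta> \<le> x" using d by (simp add: le_divide_eq)
    then have "of_int j * \<delta> \<in> {0..1}" using x jJ d by auto
    moreover have "\<lfloor>(of_int j * \<delta>)/\<delta>\<rfloor> = j" using d by simp
    ultimately have "\<bar>g x - g (of_int j * \<delta>)\<bar> \<le> \<delta> * h j"
      using osc[OF x(1)] unfolding j_def by metis
    then have "\<bar>round (2 * g x / \<delta>) - c j\<bar> \<le> H j"
      unfolding c_def H_def by (rule round_double_diff_le[OF d])
    then show "p \<in> Q"
      using jJ round_double_in_column[OF j_def[symmetric]]
      unfolding Q_def x(2) grid_index_def by (auto simp: abs_le_iff)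
  qed
  then have "covering_number \<delta> (graph01 g) \<le> card Q"
    by (rule covering_number_le_card_grid[OF d, rotated]) (simp add: Q_def)
  also have "card Q \<le> (\<Sum>j\<in>{0..J}. card ({2*j..2*j+2} \<times> {c j - H j .. c j + H j}))"
    unfolding Q_def by (rule card_UN_le) simp
  also have "\<dots> = (\<Sum>j\<in>{0..J}. 3 * nat (2 * H j + 1))"
    by (intro sum.cong) (auto simp: card_cartesian_product)
  finally have "real (covering_number \<delta> (graph01 g)) \<le> (\<Sum>j\<in>{0..J}. real (3 * nat (2 * H j + 1)))"
    by (simp only: of_nat_le_iff of_nat_sum[symmetric])
  also have "\<dots> \<le> (\<Sum>j\<in>{0..J}. 12 * h j + 15)"
  proof (rule sum_mono)
    fix j
    have "H j \<ge> 1" unfolding H_def using h[of j] by (smt (verit) ceiling_less_zero)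
    then have "real (3 * nat (2 * H j + 1)) = 3 * (2 * of_int (H j) + 1)" by simp
    also have "\<dots> \<le> 12 * h j + 15" unfolding H_def using ceiling_correct[of "2 * h j"] by simp
    finally show "real (3 * nat (2 * H j + 1)) \<le> 12 * h j + 15" .
  qed
  finally show ?thesis unfolding J_def by simp
qed

section \<open>Lipschitz control by the generators\<close>

text \<open>Boundedness is what makes this class closed under products.\<close>
definition bounded_lipschitz_wrt ::
  "'a set \<Rightarrow> nat \<Rightarrow> (nat \<Rightarrow> 'a \<Rightarrow> real) \<Rightarrow> ('a \<Rightarrow> real) \<Rightarrow> bool" where
  "bounded_lipschitz_wrt S m f g \<longleftrightarrow> (\<exists>B\<ge>0. \<forall>x\<in>S. \<bar>g x\<bar> \<le> B) \<and>
     (\<exists>L\<ge>0. \<forall>x\<in>S. \<forall>y\<in>S. \<bar>g x - g y\<bar> \<le> L * (\<Sum>i<m. \<bar>f i x - f i y\<bar>))"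

lemma bounded_lipschitz_wrt_const: "bounded_lipschitz_wrt S m f (\<lambda>x. c)"
proof -
  have "\<forall>x\<in>S. \<bar>c\<bar> \<le> \<bar>c\<bar>" "\<forall>x\<in>S. \<forall>y\<in>S. \<bar>c - c\<bar> \<le> 0 * (\<Sum>i<m. \<bar>f i x - f i y\<bar>)"
    by simp_all
  then show ?thesis unfolding bounded_lipschitz_wrt_def by (meson abs_ge_zero order_refl)
qed

lemma bounded_lipschitz_wrt_component:
  assumes "i < m" "\<forall>x\<in>S. \<bar>f i x\<bar> \<le> B"
  shows "bounded_lipschitz_wrt S m f (f i)"
proof -
  have "\<bar>f i x - f i y\<bar> \<le> 1 * (\<Sum>i<m. \<bar>f i x - f i y\<bar>)" for x y
    using member_le_sum[of i "{..<m}" "\<lambda>i. \<bar>f i x - f i y\<bar>"] assms(1) by auto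
  moreover have "\<forall>x\<in>S. \<bar>f i x\<bar> \<le> max B 0" using assms(2) by (meson max.coboundedI1)
  ultimately show ?thesis unfolding bounded_lipschitz_wrt_def by (meson max.cobounded2 zero_le_one)
qed

lemma bounded_lipschitz_wrt_add:
  assumes "bounded_lipschitz_wrt S m f g" "bounded_lipschitz_wrt S m f h"
  shows "bounded_lipschitz_wrt S m f (\<lambda>x. g x + h x)"
proof -
  obtain B1 L1 where g: "B1 \<ge> 0" "L1 \<ge> 0" "\<forall>x\<in>S. \<bar>g x\<bar> \<le> B1"
     "\<forall>x\<in>S. \<forall>y\<in>S. \<bar>g x - g y\<bar> \<le> L1 * (\<Sum>i<m. \<bar>f i x - f i y\<bar>)"
    using assms(1) unfolding bounded_lipschitz_wrt_def by blast
  obtain B2 L2 where h: "B2 \<ge> 0" "L2 \<ge> 0" "\<forall>x\<in>S. \<bar>h x\<bar> \<le> B2"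
     "\<forall>x\<in>S. \<forall>y\<in>S. \<bar>h x - h y\<bar> \<le> L2 * (\<Sum>i<m. \<bar>f i x - f i y\<bar>)"
    using assms(2) unfolding bounded_lipschitz_wrt_def by blast
  have "\<bar>g x + h x - (g y + h y)\<bar> \<le> (L1 + L2) * (\<Sum>i<m. \<bar>f i x - f i y\<bar>)"
    if "x \<in> S" "y \<in> S" for x y
  proof -
    have "\<bar>g x + h x - (g y + h y)\<bar> \<le> \<bar>g x - g y\<bar> + \<bar>h x - h y\<bar>" by linarith
    then show ?thesis
      using g(4)[rule_format, OF that] h(4)[rule_format, OF that] by (simp add: distrib_right)
  qed
  moreover have "\<bar>g x + h x\<bar> \<le> B1 + B2" if "x \<in> S" for x
    using g(3) h(3) that by (smt (verit))
  moreover have "B1 + B2 \<ge> 0" "L1 + L2 \<ge> 0" using g h by simp_all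
  ultimately show ?thesis unfolding bounded_lipschitz_wrt_def by blast
qed

lemma bounded_lipschitz_wrt_mult:
  assumes "bounded_lipschitz_wrt S m f g" "bounded_lipschitz_wrt S m f h"
  shows "bounded_lipschitz_wrt S m f (\<lambda>x. g x * h x)"
proof -
  obtain B1 L1 where g: "B1 \<ge> 0" "L1 \<ge> 0" "\<forall>x\<in>S. \<bar>g x\<bar> \<le> B1"
     "\<forall>x\<in>S. \<forall>y\<in>S. \<bar>g x - g y\<bar> \<le> L1 * (\<Sum>i<m. \<bar>f i x - f i y\<bar>)"
    using assms(1) unfolding bounded_lipschitz_wrt_def by blast
  obtain B2 L2 where h: "B2 \<ge> 0" "L2 \<ge> 0" "\<forall>x\<in>S. \<bar>h x\<bar> \<le> B2"
     "\<forall>x\<in>S. \<forall>y\<in>S. \<bar>h x - h y\<bar> \<le> L2 * (\<Sum>i<m. \<bar>f i x - f i y\<bar>)"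
    using assms(2) unfolding bounded_lipschitz_wrt_def by blast
  have "\<bar>g x * h x - g y * h y\<bar> \<le> (B1 * L2 + B2 * L1) * (\<Sum>i<m. \<bar>f i x - f i y\<bar>)"
    if xy: "x \<in> S" "y \<in> S" for x y
  proof -
    define s where "s = (\<Sum>i<m. \<bar>f i x - f i y\<bar>)"
    have "g x * h x - g y * h y = g x * (h x - h y) + h y * (g x - g y)" by algebra
    then have "\<bar>g x * h x - g y * h y\<bar> \<le> \<bar>g x\<bar> * \<bar>h x - h y\<bar> + \<bar>h y\<bar> * \<bar>g x - g y\<bar>"
      by (metis abs_mult abs_triangle_ineq)
    also have "\<dots> \<le> B1 * (L2 * s) + B2 * (L1 * s)"
      using xy g h unfolding s_def by (intro add_mono mult_mono) auto
    finally show ?thesis unfolding s_def by (simp add: algebra_simps)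
  qed
  moreover have "\<bar>g x * h x\<bar> \<le> B1 * B2" if "x \<in> S" for x
    using g(1,3) h(3) that unfolding abs_mult by (intro mult_mono) auto
  moreover have "B1 * B2 \<ge> 0" "B1 * L2 + B2 * L1 \<ge> 0" using g h by simp_all
  ultimately show ?thesis unfolding bounded_lipschitz_wrt_def by blast
qed

lemma bounded_lipschitz_wrt_sum:
  assumes "\<And>a. a \<in> A \<Longrightarrow> bounded_lipschitz_wrt S m f (g a)"
  shows "bounded_lipschitz_wrt S m f (\<lambda>x. \<Sum>a\<in>A. g a x)"
  using assms
  by (induction A rule: infinite_finite_induct)
     (auto intro: bounded_lipschitz_wrt_add bounded_lipschitz_wrt_const)

lemma bounded_lipschitz_wrt_prod:
  assumes "\<And>a. a \<in> A \<Longrightarrow> bounded_lipschitz_wrt S m f (g a)"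
  shows "bounded_lipschitz_wrt S m f (\<lambda>x. \<Prod>a\<in>A. g a x)"
  using assms
  by (induction A rule: infinite_finite_induct)
     (auto intro: bounded_lipschitz_wrt_mult bounded_lipschitz_wrt_const)

lemma bounded_lipschitz_wrt_power:
  assumes "bounded_lipschitz_wrt S m f g"
  shows "bounded_lipschitz_wrt S m f (\<lambda>x. g x ^ n)"
  by (induction n) (auto intro: bounded_lipschitz_wrt_mult bounded_lipschitz_wrt_const assms)

lemma poly_ring_of_bounded_lipschitz_wrt:
  assumes "\<And>i. i < m \<Longrightarrow> bounded (f i ` S)" "r \<in> poly_ring_of m f"
  shows "bounded_lipschitz_wrt S m f r"
proof -
  obtain A c where r: "r = (\<lambda>x. \<Sum>\<alpha>\<in>A. c \<alpha> * (\<Prod>i<m. f i x ^ \<alpha> i))"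
    using assms(2) unfolding poly_ring_of_def by blast
  have "bounded_lipschitz_wrt S m f (f i)" if "i < m" for i
    using assms(1)[OF that] that by (auto simp: bounded_real intro: bounded_lipschitz_wrt_component)
  then show ?thesis unfolding r
    by (intro bounded_lipschitz_wrt_sum bounded_lipschitz_wrt_mult bounded_lipschitz_wrt_const
        bounded_lipschitz_wrt_prod bounded_lipschitz_wrt_power) auto
qed

lemma covering_number_graph01_le_sum:
  fixes f :: "nat \<Rightarrow> real \<Rightarrow> real" and r :: "real \<Rightarrow> real"
  assumes d: "0 < \<delta>" "\<delta> \<le> 1" and m: "0 < m"
    and cont: "\<And>i. i < m \<Longrightarrow> continuous_on {0..1} (f i)"
    and L: "L \<ge> 0" and lip: "\<forall>x\<in>{0..1}. \<forall>y\<in>{0..1}. \<bar>r x - r y\<bar> \<le> L * (\<Sum>i<m. \<bar>f i x - f i y\<bar>)"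
  shows "real (covering_number \<delta> (graph01 r))
    \<le> (60 + 72 * L) * (\<Sum>i<m. real (covering_number \<delta> (graph01 (f i))))"
proof -
  define N where "N i = covering_number \<delta> (graph01 (f i))" for i
  have "\<exists>C. \<forall>i\<in>{..<m}. delta_cover \<delta> (C i) (graph01 (f i)) \<and> card (C i) = N i"
    by (rule bchoice) (metis covering_number_graph01_attained cont d(1) lessThan_iff N_def)
  then obtain C where C: "\<And>i. i < m \<Longrightarrow> delta_cover \<delta> (C i) (graph01 (f i))"
    and card_C: "\<And>i. i < m \<Longrightarrow> card (C i) = N i"
    by auto
  define D where "D i j = card (column_sets \<delta> (C i) (f i) j)" for i j
  define h where "h j = 2 * L * (\<Sum>i<m. real (D i j))" for j
  define J where "J = \<lfloor>1/\<delta>\<rfloor>"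
  have "\<bar>r x - r y\<bar> \<le> \<delta> * h \<lfloor>x/\<delta>\<rfloor>"
    if "x \<in> {0..1}" "y \<in> {0..1}" "\<lfloor>x/\<delta>\<rfloor> = \<lfloor>y/\<delta>\<rfloor>" for x y
  proof -
    have "\<bar>r x - r y\<bar> \<le> L * (\<Sum>i<m. \<bar>f i x - f i y\<bar>)" using lip that by blast
    also have "\<dots> \<le> L * (\<Sum>i<m. 2 * \<delta> * real (D i \<lfloor>x/\<delta>\<rfloor>))"
      using L C cont that d(1) unfolding D_def
      by (intro mult_left_mono sum_mono oscillation_le_card_column_sets) auto
    finally show ?thesis unfolding h_def by (simp add: sum_distrib_left algebra_simps)
  qed
  moreover have "h j \<ge> 0" for j unfolding h_def using L by (simp add: sum_nonneg)
  ultimately have "real (covering_number \<delta> (graph01 r)) \<le> (\<Sum>j\<in>{0..J}. 12 * h j + 15)"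
    unfolding J_def by (intro covering_number_graph01_le_column_oscillation d(1)) auto
  also have "\<dots> = 24 * L * (\<Sum>i<m. real (\<Sum>j\<in>{0..J}. D i j)) + 15 * real (card {0..J})"
    unfolding h_def by (simp add: sum.distrib sum_distrib_left sum.swap[of _ "{0..J}"] algebra_simps)
  also have "\<dots> \<le> 24 * L * (\<Sum>i<m. 3 * real (N i)) + 15 * (4 * (\<Sum>i<m. real (N i)))"
  proof (intro add_mono mult_left_mono sum_mono)
    fix i assume "i \<in> {..<m}"
    then show "real (\<Sum>j\<in>{0..J}. D i j) \<le> 3 * real (N i)"
      using sum_card_column_sets_le[OF d(1) C] card_C unfolding D_def
      by (metis lessThan_iff finite_atLeastAtMost_int of_nat_le_iff of_nat_mult of_nat_numeral)
  next
    have "real (card {0..J}) \<le> 4 * real (N 0)"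
      using card_columns_le_card_delta_cover[OF d C] card_C m unfolding J_def by simp
    also have "real (N 0) \<le> (\<Sum>i<m. real (N i))" using m by (intro member_le_sum) auto
    finally show "real (card {0..J}) \<le> 4 * (\<Sum>i<m. real (N i))" by simp
  qed (use L in auto)
  finally show ?thesis unfolding N_def by (simp add: sum_distrib_left algebra_simps)
qed

section \<open>Upper box dimension\<close>

text \<open>No hypothesis b \<ge> 1 is needed: for naturals ln is nonnegative, since ln 0 = 0.\<close>
lemma ln_le_ln_add_ln_of_nat:
  fixes a b :: nat
  assumes "real a \<le> K * real b" "K \<ge> 1"
  shows "ln (real a) \<le> ln K + ln (real b)"
proof (cases "a = 0")
  case True
  have "0 \<le> ln (real b)" by (cases "b = 0") auto
  then show ?thesis using True assms(2) by simp
next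
  case False
  then have "b \<noteq> 0" using assms(1) by (metis mult_zero_right of_nat_0 of_nat_le_0_iff)
  then have "ln (real a) \<le> ln (K * real b)" using False assms by (subst ln_le_cancel_iff) auto
  also have "\<dots> = ln K + ln (real b)" using \<open>b \<noteq> 0\<close> assms(2) by (simp add: ln_mult)
  finally show ?thesis .
qed

lemma Limsup_le_Max_of_eventually_le:
  fixes s c :: "'a \<Rightarrow> real" and t :: "'i \<Rightarrow> 'a \<Rightarrow> real"
  assumes I: "finite I" and c: "(c \<longlongrightarrow> 0) F"
    and le: "\<forall>\<^sub>F x in F. \<exists>i\<in>I. s x \<le> c x + t i x"
  shows "Limsup F (\<lambda>x. ereal (s x)) \<le> Max ((\<lambda>i. Limsup F (\<lambda>x. ereal (t i x))) ` I)"
    (is "_ \<le> ?M")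
  unfolding Limsup_le_iff
proof (intro allI impI)
  fix y assume "?M < y"
  then obtain q where q: "?M < ereal q" "ereal q < y" using ereal_dense2 by blast
  then obtain q' where q': "?M < ereal q'" "ereal q' < ereal q" using ereal_dense2 by blast
  have "\<forall>\<^sub>F x in F. ereal (t i x) < ereal q'" if "i \<in> I" for i
    using I that q'(1) by (intro Limsup_lessD) (auto intro: le_less_trans[OF Max_ge])
  then have "\<forall>\<^sub>F x in F. \<forall>i\<in>I. t i x < q'"
    using I by (subst eventually_ball_finite_distrib) auto
  moreover have "\<forall>\<^sub>F x in F. c x < q - q'" using q'(2) by (intro order_tendstoD(2)[OF c]) simp
  ultimately show "\<forall>\<^sub>F x in F. ereal (s x) < y"
    using le
  proof eventually_elim
    case (elim x)
    then obtain i where "i \<in> I" "s x \<le> c x + t i x" by blast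
    then have "ereal (s x) < ereal q" using elim(1,2) by fastforce
    then show ?case using q(2) by (rule order.strict_trans)
  qed
qed

lemma upper_box_dim_le_Max_of_covering_number_le:
  fixes F :: "'a::metric_space set" and G :: "'i \<Rightarrow> 'a set"
  assumes I: "finite I" "I \<noteq> {}" and K: "K \<ge> 0"
    and le: "\<forall>\<^sub>F \<delta> in at_right 0.
      real (covering_number \<delta> F) \<le> K * (\<Sum>i\<in>I. real (covering_number \<delta> (G i)))"
  shows "upper_box_dim F \<le> Max ((\<lambda>i. upper_box_dim (G i)) ` I)"
proof -
  define K' where "K' = max 1 (K * card I)"
  have small: "\<forall>\<^sub>F \<delta> in at_right 0. 0 < \<delta> \<and> \<delta> < (1::real)"
    by (rule eventually_at_rightI[of _ 1]) auto
  have ratio_le: "\<forall>\<^sub>F \<delta> in at_right 0. \<exists>i\<in>I. ln (real (covering_number \<delta> F)) / - ln \<delta>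
      \<le> ln K' / - ln \<delta> + ln (real (covering_number \<delta> (G i))) / - ln \<delta>"
    using le small
  proof eventually_elim
    case (elim \<delta>)
    define N where "N i = covering_number \<delta> (G i)" for i
    have "Max (N ` I) \<in> N ` I" using I by simp
    then obtain i0 where i0: "i0 \<in> I" "N i0 = Max (N ` I)" by (auto simp: image_iff)
    have "(\<Sum>i\<in>I. real (N i)) \<le> (\<Sum>i\<in>I. real (N i0))"
      using I i0 by (intro sum_mono) simp
    then have "real (covering_number \<delta> F) \<le> K * (card I * real (N i0))"
      using elim(1) K unfolding N_def by (simp add: order_trans mult_left_mono)
    also have "\<dots> \<le> K' * real (N i0)"
      unfolding K'_def mult.assoc[symmetric] by (intro mult_right_mono) auto
    finally have "real (covering_number \<delta> F) \<le> K' * real (N i0)" .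
    then have "ln (real (covering_number \<delta> F)) \<le> ln K' + ln (real (N i0))"
      unfolding K'_def by (intro ln_le_ln_add_ln_of_nat) auto
    moreover have "- ln \<delta> > 0" using elim by simp
    ultimately have "ln (real (covering_number \<delta> F)) / - ln \<delta> \<le> (ln K' + ln (real (N i0))) / - ln \<delta>"
      by (intro divide_right_mono) auto
    then show ?case using i0(1) unfolding N_def add_divide_distrib by blast
  qed
  have "((\<lambda>\<delta>::real. ln K' / - ln \<delta>) \<longlongrightarrow> 0) (at_right 0)"
  proof (rule tendsto_divide_0[OF tendsto_const])
    show "LIM \<delta> at_right 0. - ln (\<delta>::real) :> at_infinity"
      using ln_at_0 unfolding filterlim_uminus_at_bot by (rule filterlim_at_top_imp_at_infinity)
  qed
  then show ?thesis
    unfolding upper_box_dim_def by (rule Limsup_le_Max_of_eventually_le[OF I(1) _ ratio_le])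
qed

theorem mainTheorem8:
  fixes m :: nat and f :: "nat \<Rightarrow> real \<Rightarrow> real" and r :: "real \<Rightarrow> real"
  assumes "m \<ge> 1"
    and "\<And>i. i < m \<Longrightarrow> continuous_on {0..1} (f i)"
    and "r \<in> poly_ring_of m f"
  shows "upper_box_dim (graph01 r) \<le> Max {upper_box_dim (graph01 (f i)) | i. i < m}"
proof -
  have "bounded (f i ` {0..1})" if "i < m" for i
    using assms(2)[OF that] by (intro compact_imp_bounded compact_continuous_image) auto
  then obtain L where L: "L \<ge> 0"
    "\<forall>x\<in>{0..1}. \<forall>y\<in>{0..1}. \<bar>r x - r y\<bar> \<le> L * (\<Sum>i<m. \<bar>f i x - f i y\<bar>)"
    using poly_ring_of_bounded_lipschitz_wrt[OF _ assms(3)] unfolding bounded_lipschitz_wrt_def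
    by blast
  have cover: "\<forall>\<^sub>F \<delta> in at_right 0. real (covering_number \<delta> (graph01 r))
      \<le> (60 + 72 * L) * (\<Sum>i<m. real (covering_number \<delta> (graph01 (f i))))"
    using assms(1,2) L by (intro eventually_at_rightI[of _ 1] covering_number_graph01_le_sum) auto
  have "upper_box_dim (graph01 r) \<le> Max ((\<lambda>i. upper_box_dim (graph01 (f i))) ` {..<m})"
    using assms(1) L(1)
    by (intro upper_box_dim_le_Max_of_covering_number_le[OF _ _ _ cover]) (auto simp: lessThan_empty_iff)
  also have "(\<lambda>i. upper_box_dim (graph01 (f i))) ` {..<m}
      = {upper_box_dim (graph01 (f i)) | i. i < m}"
    by auto
  finally show ?thesis .
qed

end
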